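(* Let $g\ge2$, let $C$ be a stable curve of compact type of genus $g$, and let $X$ be an irreducible component of $C$. Let $M$ be an $X$-quasistable line bundle on $C$ of multidegree $\underline d$ (of total degree $d$), and let $M'$ be a line bundle on $C$ of degree $1$ on $X$ and degree $0$ on every other component. Then the line bundle $$M\otimes M'\otimes\mathcal O_C\Big(-\sum_{Z\in\mathcal T_{\underline d}(X)}Z\Big)$$ is $X$-quasistable.
   Context: All curves are connected, projective, reduced, nodal, over an algebraically closed field; $g_C=1-\chi(\mathcal O_C)$. Subcurve: union of irreducible components; $Y'$ is the closure of the complement, $k_Y=\#(Y\cap Y')$. Tail: subcurve $Z$ with $k_Z=1$. Compact type: every node separating. Stable: every smooth rational component meets the rest in $\ge3$ points. Multidegree of $L$: $(\deg L|_{X_i})_i$, total degree $d$, $d_Y=\sum_{X_i\subseteq Y}d_i$. $\deg\omega_C|_Y=2g_Y-2+k_Y$. A multidegree $\underline d$ of total degree $d$ is semistable if $|d_Y-\frac{d}{2g-2}\deg\omega_C|_Y|\le k_Y/2$ for all non-empty proper subcurves $Y$, and $X$-quasistable if in addition $d_Y-\frac{d}{2g-2}\deg\omega_C|_Y>-k_Y/2$ for every proper subcurve $Y\supseteq X$; a line bundle is semistable/$X$-quasistable if its multidegree is. For a tail $Z$ with $Z\cap Z'=\{n\}$, $\mathcal O_C(Z)$ is the line bundle with restrictions $\mathcal O_Z(-n)$ on $Z$ and $\mathcal O_{Z'}(n)$ on $Z'$. Given a multidegree $\underline d$ of total degree $d$, a tail $Z$ is $\underline d$-big if $d_Z\cdot\deg\omega_C-d\cdot\deg(\omega_C|_Z)<2g_Z-g_C$,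 and $\mathcal T_{\underline d}(X)$ is the set of $\underline d$-big tails $Z$ with $X\not\subseteq Z$. *)

theory Defs
  imports Complex_Main
begin

text \<open>Combinatorial model of a connected projective reduced nodal curve C:
  comps = set of irreducible components, nodes = set of nodes,
  ends n = set of components through node n (one component for a self-node,
  two for a node joining distinct components), ggen v = geometric genus of
  (the normalization of) component v.\<close>

record ('v, 'n) nodal_curve =
  comps :: "'v set"
  nodes :: "'n set"
  ends  :: "'n \<Rightarrow> 'v set"
  ggen  :: "'v \<Rightarrow> nat"

definition adj_rel :: "('v, 'n) nodal_curve \<Rightarrow> 'n set \<Rightarrow> ('v \<times> 'v) set" where
  "adj_rel C N' = {(u, w). \<exists>n\<in>N'. u \<in> ends C n \<and> w \<in> ends C n}"

definition connected_without :: "('v, 'n) nodal_curve \<Rightarrow> 'n set \<Rightarrow> bool" where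
  "connected_without C N' \<longleftrightarrow>
     (\<forall>u\<in>comps C. \<forall>w\<in>comps C. (u, w) \<in> (adj_rel C (nodes C - N'))\<^sup>*)"

definition wf_curve :: "('v, 'n) nodal_curve \<Rightarrow> bool" where
  "wf_curve C \<longleftrightarrow> finite (comps C) \<and> comps C \<noteq> {} \<and> finite (nodes C) \<and>
     (\<forall>n\<in>nodes C. ends C n \<subseteq> comps C \<and> (card (ends C n) = 1 \<or> card (ends C n) = 2))
     \<and> connected_without C {}"

definition separating :: "('v, 'n) nodal_curve \<Rightarrow> 'n \<Rightarrow> bool" where
  "separating C n \<longleftrightarrow> \<not> connected_without C {n}"

definition compact_type :: "('v, 'n) nodal_curve \<Rightarrow> bool" where
  "compact_type C \<longleftrightarrow> (\<forall>n\<in>nodes C. separating C n)"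

definition k_sub :: "('v, 'n) nodal_curve \<Rightarrow> 'v set \<Rightarrow> nat" where
  "k_sub C Y = card {n\<in>nodes C. ends C n \<inter> Y \<noteq> {} \<and> ends C n \<inter> (comps C - Y) \<noteq> {}}"

text \<open>chi(O_Y) = sum of chi of normalized components minus number of nodes of Y.\<close>
definition chi_sub :: "('v, 'n) nodal_curve \<Rightarrow> 'v set \<Rightarrow> int" where
  "chi_sub C Y = (\<Sum>v\<in>Y. 1 - int (ggen C v)) - int (card {n\<in>nodes C. ends C n \<subseteq> Y})"

definition genus_sub :: "('v, 'n) nodal_curve \<Rightarrow> 'v set \<Rightarrow> int" where
  "genus_sub C Y = 1 - chi_sub C Y"

definition genus :: "('v, 'n) nodal_curve \<Rightarrow> int" where
  "genus C = genus_sub C (comps C)"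

definition deg_omega :: "('v, 'n) nodal_curve \<Rightarrow> 'v set \<Rightarrow> int" where
  "deg_omega C Y = 2 * genus_sub C Y - 2 + int (k_sub C Y)"

definition stable :: "('v, 'n) nodal_curve \<Rightarrow> bool" where
  "stable C \<longleftrightarrow> (\<forall>v\<in>comps C. ggen C v = 0 \<and> (\<forall>n\<in>nodes C. ends C n \<noteq> {v})
                     \<longrightarrow> k_sub C {v} \<ge> 3)"

type_synonym 'v multideg = "'v \<Rightarrow> int"

definition deg_sub :: "'v multideg \<Rightarrow> 'v set \<Rightarrow> int" where
  "deg_sub md Y = (\<Sum>v\<in>Y. md v)"

definition total_deg :: "('v, 'n) nodal_curve \<Rightarrow> 'v multideg \<Rightarrow> int" where
  "total_deg C md = deg_sub md (comps C)"

definition balance :: "('v, 'n) nodal_curve \<Rightarrow> 'v multideg \<Rightarrow> 'v set \<Rightarrow> real" where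
  "balance C md Y = real_of_int (deg_sub md Y)
     - real_of_int (total_deg C md) / real_of_int (2 * genus C - 2) * real_of_int (deg_omega C Y)"

definition semistable :: "('v, 'n) nodal_curve \<Rightarrow> 'v multideg \<Rightarrow> bool" where
  "semistable C md \<longleftrightarrow> (\<forall>Y. Y \<subseteq> comps C \<and> Y \<noteq> {} \<and> Y \<noteq> comps C \<longrightarrow>
      \<bar>balance C md Y\<bar> \<le> real (k_sub C Y) / 2)"

definition quasistable :: "('v, 'n) nodal_curve \<Rightarrow> 'v \<Rightarrow> 'v multideg \<Rightarrow> bool" where
  "quasistable C X md \<longleftrightarrow> semistable C md \<and>
     (\<forall>Y. Y \<subseteq> comps C \<and> Y \<noteq> comps C \<and> X \<in> Y \<longrightarrow> balance C md Y > - real (k_sub C Y) / 2)"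

definition is_tail :: "('v, 'n) nodal_curve \<Rightarrow> 'v set \<Rightarrow> bool" where
  "is_tail C Z \<longleftrightarrow> Z \<subseteq> comps C \<and> k_sub C Z = 1"

definition big_tail :: "('v, 'n) nodal_curve \<Rightarrow> 'v multideg \<Rightarrow> 'v set \<Rightarrow> bool" where
  "big_tail C md Z \<longleftrightarrow> is_tail C Z \<and>
     deg_sub md Z * (2 * genus C - 2) - total_deg C md * deg_omega C Z < 2 * genus_sub C Z - genus C"

definition big_tails :: "('v, 'n) nodal_curve \<Rightarrow> 'v multideg \<Rightarrow> 'v \<Rightarrow> 'v set set" where
  "big_tails C md X = {Z. big_tail C md Z \<and> X \<notin> Z}"

text \<open>Multidegree of O_C(Z) for a tail Z meeting Z' in the single node n:
  -1 on the component of Z through n, +1 on the component of Z' through n.\<close>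
definition mdeg_OZ :: "('v, 'n) nodal_curve \<Rightarrow> 'v set \<Rightarrow> 'v multideg" where
  "mdeg_OZ C Z v = (\<Sum>n\<in>{n\<in>nodes C. ends C n \<inter> Z \<noteq> {} \<and> ends C n \<inter> (comps C - Z) \<noteq> {}}.
       if v \<in> ends C n then (if v \<in> Z then -1 else 1) else 0)"

definition unit_mdeg :: "'v \<Rightarrow> 'v multideg" where
  "unit_mdeg X v = (if v = X then 1 else 0)"

end

theory Submission imports Defs begin

(* On a curve of compact type every node n is separating, so it cuts off a
   unique tail, the far side of n, namely the side not containing the fixed component X;
   conversely every tail not containing X is such a far side.  Both the canonical degree
   and the balance  b(Y) = d_Y - d/(2g-2) deg(omega|Y)  are additive over components, and
   a telescoping argument along paths in the dual tree shows that the balance of any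
   subcurve Y is a signed sum, over the nodes crossing Y, of the balances of the far sides.
   Hence a multidegree is X-quasistable as soon as every far side has balance in the
   half-open window [-1/2, 1/2), and conversely quasistability gives exactly this window.
   The twist by M' and by O(-Z) for the big tails Z changes the (scaled) balance of a far
   side by an explicit integer amount, and an elementary integer estimate shows that it
   stays in the window.  The file develops the dual-tree combinatorics first, then the
   balance calculus for stable curves of genus at least 2, then the effect of the twist,
   and finally derives the theorem. *)

text \<open>Balance of a subcurve multiplied by the positive integer 2g-2, so that window
  conditions on balances become integer inequalities.\<close>

definition scaled_balance :: "('v, 'n) nodal_curve \<Rightarrow> 'v multideg \<Rightarrow> 'v set \<Rightarrow> int" where
  "scaled_balance C m Y = deg_sub m Y * (2 * genus C - 2) - total_deg C m * deg_omega C Y"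

text \<open>The core numerical estimate: a tail Z of genus gF has canonical degree w = 2gF-1.
  If its scaled balance A lies in the window, then so does A + (2G-2) - w when Z is big
  (A < 2gF - G) and A - w otherwise.\<close>

lemma twist_stays_in_window:
  fixes G A w gF :: int
  assumes w: "w = 2 * gF - 1" "0 \<le> w" "w \<le> 2 * G - 2"
    and A: "- (2 * G - 2) \<le> 2 * A" "2 * A < 2 * G - 2"
  defines "A' \<equiv> A + (if A < 2 * gF - G then 2 * G - 2 else 0) - w"
  shows "- (2 * G - 2) \<le> 2 * A' \<and> 2 * A' < 2 * G - 2"
  using assms unfolding A'_def by (cases "A < 2 * gF - G") auto

lemma sum_indicator_subset:
  assumes "finite A" "S \<subseteq> A"
  shows "(\<Sum>v\<in>A. of_bool (v \<in> S) * f v) = (\<Sum>v\<in>S. (f v :: real))"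
proof -
  have "(\<Sum>v\<in>A. of_bool (v \<in> S) * f v) = (\<Sum>v\<in>A. if v \<in> S then f v else 0)"
    by (intro sum.cong) auto
  also have "\<dots> = sum f (A \<inter> S)" by (simp add: sum.inter_restrict[OF assms(1)])
  finally show ?thesis using assms(2) by (simp add: Int_absorb1)
qed

locale compact_type_curve =
  fixes C :: "('v, 'n) nodal_curve" and X :: 'v
  assumes wf: "wf_curve C" and compact: "compact_type C" and X_comp: "X \<in> comps C"
begin

lemma comps_finite: "finite (comps C)"
  using wf by (simp add: wf_curve_def)

lemma nodes_finite: "finite (nodes C)"
  using wf by (simp add: wf_curve_def)

lemma ends_subset: "n \<in> nodes C \<Longrightarrow> ends C n \<subseteq> comps C"
  using wf by (simp add: wf_curve_def)

lemma dual_graph_connected: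
  "u \<in> comps C \<Longrightarrow> w \<in> comps C \<Longrightarrow> (u, w) \<in> (adj_rel C (nodes C))\<^sup>*"
  using wf by (simp add: wf_curve_def connected_without_def)

lemma reachability_sym: "(u, w) \<in> (adj_rel C N)\<^sup>* \<Longrightarrow> (w, u) \<in> (adj_rel C N)\<^sup>*"
proof (induction rule: rtrancl_induct)
  case (step y z)
  have "(z, y) \<in> adj_rel C N" using step(2) by (auto simp: adj_rel_def)
  then show ?case using step(3) by (rule converse_rtrancl_into_rtrancl)
qed simp

lemma reachable_in_closed_set:
  assumes "(v, x) \<in> (adj_rel C N)\<^sup>*" "v \<in> S"
    and "\<And>m p q. m \<in> N \<Longrightarrow> p \<in> ends C m \<Longrightarrow> q \<in> ends C m \<Longrightarrow> p \<in> S \<Longrightarrow> q \<in> S"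
  shows "x \<in> S"
  using assms(1)
proof (induction rule: rtrancl_induct)
  case base then show ?case using assms(2) .
next
  case (step y z)
  then obtain m where "m \<in> N" "y \<in> ends C m" "z \<in> ends C m" by (auto simp: adj_rel_def)
  then show ?case using step assms(3) by blast
qed

text \<open>A self-node is never separating, so on a curve of compact type every node joins
  two distinct components.\<close>

lemma node_two_branches: assumes n: "n \<in> nodes C" shows "card (ends C n) = 2"
proof (rule ccontr)
  assume "card (ends C n) \<noteq> 2"
  then have "card (ends C n) = 1" using wf n by (auto simp: wf_curve_def)
  then obtain v where e: "ends C n = {v}" using card_1_singleton_iff by (metis One_nat_def)
  have "adj_rel C (nodes C) \<subseteq> (adj_rel C (nodes C - {n}))\<^sup>*"
  proof
    fix ab assume "ab \<in> adj_rel C (nodes C)"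
    then obtain a b m where ab: "ab = (a, b)" "m \<in> nodes C" "a \<in> ends C m" "b \<in> ends C m"
      by (auto simp: adj_rel_def)
    show "ab \<in> (adj_rel C (nodes C - {n}))\<^sup>*"
    proof (cases "m = n")
      case True then show ?thesis using ab e by auto
    next
      case False
      then have "(a, b) \<in> adj_rel C (nodes C - {n})" using ab by (auto simp: adj_rel_def)
      then show ?thesis using ab by auto
    qed
  qed
  then have "(adj_rel C (nodes C))\<^sup>* \<subseteq> (adj_rel C (nodes C - {n}))\<^sup>*"
    by (rule rtrancl_subset_rtrancl)
  then have "connected_without C {n}"
    using dual_graph_connected unfolding connected_without_def by blast
  then show False using compact n by (auto simp: compact_type_def separating_def)
qed

lemma node_ends_pair: "n \<in> nodes C \<Longrightarrow> \<exists>p q. ends C n = {p, q} \<and> p \<noteq> q"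
  using node_two_branches card_2_iff by blast

definition far_side :: "'n \<Rightarrow> 'v set" where
  "far_side n = {v \<in> comps C. (X, v) \<notin> (adj_rel C (nodes C - {n}))\<^sup>*}"

lemma far_side_subset: "far_side n \<subseteq> comps C"
  by (auto simp: far_side_def)

lemma X_notin_far_side: "X \<notin> far_side n"
  by (auto simp: far_side_def)

lemma far_side_closed:
  assumes "m \<in> nodes C" "m \<noteq> n" "p \<in> ends C m" "q \<in> ends C m"
  shows "p \<in> far_side n \<longleftrightarrow> q \<in> far_side n"
proof -
  have "(p, q) \<in> adj_rel C (nodes C - {n})" "(q, p) \<in> adj_rel C (nodes C - {n})"
    using assms by (auto simp: adj_rel_def)
  moreover have "p \<in> comps C" "q \<in> comps C" using assms ends_subset by auto
  ultimately show ?thesis unfolding far_side_def by (auto intro: rtrancl_into_rtrancl)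
qed

lemma far_side_nonempty: assumes n: "n \<in> nodes C" shows "far_side n \<noteq> {}"
proof
  assume empty: "far_side n = {}"
  from compact n have "\<not> connected_without C {n}"
    by (auto simp: compact_type_def separating_def)
  then obtain u w where uw: "u \<in> comps C" "w \<in> comps C"
    "(u, w) \<notin> (adj_rel C (nodes C - {n}))\<^sup>*"
    by (auto simp: connected_without_def)
  have "(X, u) \<in> (adj_rel C (nodes C - {n}))\<^sup>*" "(X, w) \<in> (adj_rel C (nodes C - {n}))\<^sup>*"
    using empty uw unfolding far_side_def by auto
  then show False using uw reachability_sym by (meson rtrancl_trans)
qed

lemma node_crosses_far_side:
  assumes n: "n \<in> nodes C"
  shows "\<exists>u w. ends C n = {u, w} \<and> u \<in> far_side n \<and> w \<notin> far_side n"
proof (rule ccontr)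
  assume no_cross: "\<not> ?thesis"
  obtain p q where pq: "ends C n = {p, q}" "p \<noteq> q" using node_ends_pair n by blast
  have same_side: "p \<in> far_side n \<longleftrightarrow> q \<in> far_side n"
    using no_cross pq by (metis insert_commute)
  obtain v where v: "v \<in> far_side n" using far_side_nonempty n by blast
  have "(v, X) \<in> (adj_rel C (nodes C))\<^sup>*"
    using dual_graph_connected v far_side_subset X_comp by blast
  then have "X \<in> far_side n"
  proof (rule reachable_in_closed_set)
    show "v \<in> far_side n" by fact
    fix m a b assume m: "m \<in> nodes C" "a \<in> ends C m" "b \<in> ends C m" "a \<in> far_side n"
    show "b \<in> far_side n"
    proof (cases "m = n")
      case True then show ?thesis using m pq same_side by auto
    next
      case False then show ?thesis using far_side_closed m by blast
    qed
  qed
  then show False using X_notin_far_side by blast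
qed

definition far_end :: "'n \<Rightarrow> 'v" where
  "far_end n = (SOME u. u \<in> ends C n \<and> u \<in> far_side n)"

definition near_end :: "'n \<Rightarrow> 'v" where
  "near_end n = (SOME u. u \<in> ends C n \<and> u \<notin> far_side n)"

lemma node_branches:
  assumes n: "n \<in> nodes C"
  shows "ends C n = {far_end n, near_end n}" "far_end n \<in> far_side n"
    "near_end n \<notin> far_side n" "far_end n \<noteq> near_end n"
    "far_end n \<in> comps C" "near_end n \<in> comps C"
proof -
  obtain u w where uw: "ends C n = {u, w}" "u \<in> far_side n" "w \<notin> far_side n"
    using node_crosses_far_side n by blast
  have "far_end n \<in> ends C n \<and> far_end n \<in> far_side n"
    unfolding far_end_def by (rule someI[of _ u]) (use uw in auto)
  moreover have "near_end n \<in> ends C n \<and> near_end n \<notin> far_side n"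
    unfolding near_end_def by (rule someI[of _ w]) (use uw in auto)
  ultimately have "far_end n = u" "near_end n = w" using uw by auto
  then show "ends C n = {far_end n, near_end n}" "far_end n \<in> far_side n"
    "near_end n \<notin> far_side n" "far_end n \<noteq> near_end n"
    using uw by auto
  then show "far_end n \<in> comps C" "near_end n \<in> comps C" using ends_subset n by auto
qed

definition crossing :: "'v set \<Rightarrow> 'n set" where
  "crossing Y = {n \<in> nodes C. ends C n \<inter> Y \<noteq> {} \<and> ends C n \<inter> (comps C - Y) \<noteq> {}}"

lemma k_sub_crossing: "k_sub C Y = card (crossing Y)"
  by (simp add: k_sub_def crossing_def)

lemma crossing_finite: "finite (crossing Y)"
  using nodes_finite by (simp add: crossing_def)

lemma crossing_nodes: "n \<in> crossing Y \<Longrightarrow> n \<in> nodes C"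
  by (simp add: crossing_def)

lemma crossing_complement: "Y \<subseteq> comps C \<Longrightarrow> crossing (comps C - Y) = crossing Y"
  unfolding crossing_def by (auto simp: Diff_Diff_Int Int_absorb1)

lemma crossing_far_side: assumes n: "n \<in> nodes C" shows "crossing (far_side n) = {n}"
proof
  show "{n} \<subseteq> crossing (far_side n)" using node_branches[OF n] n by (auto simp: crossing_def)
  show "crossing (far_side n) \<subseteq> {n}"
  proof
    fix m assume "m \<in> crossing (far_side n)"
    then obtain p q where "p \<in> ends C m" "p \<in> far_side n" "q \<in> ends C m" "q \<notin> far_side n"
      "m \<in> nodes C" by (auto simp: crossing_def)
    then show "m \<in> {n}" using far_side_closed by blast
  qed
qed

lemma far_side_is_tail: "n \<in> nodes C \<Longrightarrow> is_tail C (far_side n)"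
  using crossing_far_side far_side_subset by (simp add: is_tail_def k_sub_crossing)

lemma far_side_inj: "n \<in> nodes C \<Longrightarrow> m \<in> nodes C \<Longrightarrow> far_side n = far_side m \<Longrightarrow> n = m"
  using crossing_far_side by (metis singleton_inject)

lemma tail_is_far_side:
  assumes tail: "is_tail C Z" and XZ: "X \<notin> Z"
  shows "\<exists>n\<in>nodes C. Z = far_side n"
proof -
  have Z: "Z \<subseteq> comps C" using tail by (simp add: is_tail_def)
  have "card (crossing Z) = 1" using tail by (simp add: is_tail_def k_sub_crossing)
  then obtain n where cz: "crossing Z = {n}" using card_1_singleton_iff by (metis One_nat_def)
  then have n: "n \<in> nodes C" by (auto simp: crossing_def)
  have only_n: "m = n" if "m \<in> nodes C" "p \<in> ends C m" "q \<in> ends C m" "p \<in> Z" "q \<notin> Z"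
    for m p q
  proof -
    have "m \<in> crossing Z" using that ends_subset by (auto simp: crossing_def)
    then show ?thesis using cz by auto
  qed
  have Z_far: "Z \<subseteq> far_side n"
  proof
    fix v assume v: "v \<in> Z"
    show "v \<in> far_side n"
    proof (rule ccontr)
      assume "v \<notin> far_side n"
      then have "(X, v) \<in> (adj_rel C (nodes C - {n}))\<^sup>*" using v Z by (auto simp: far_side_def)
      then have "v \<in> comps C - Z"
        by (rule reachable_in_closed_set) (use X_comp XZ only_n ends_subset in blast)+
      then show False using v by auto
    qed
  qed
  moreover have "far_side n \<subseteq> Z"
  proof
    fix v assume v: "v \<in> far_side n"
    show "v \<in> Z"
    proof (rule ccontr)
      assume vZ: "v \<notin> Z"
      have far_in_Z: "far_end n \<in> Z"
      proof -
        have "ends C n \<inter> Z \<noteq> {}" using cz by (auto simp: crossing_def)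
        moreover have "near_end n \<notin> Z" using node_branches[OF n] Z_far by auto
        ultimately show ?thesis using node_branches[OF n] by auto
      qed
      have "(v, X) \<in> (adj_rel C (nodes C))\<^sup>*"
        using dual_graph_connected v far_side_subset X_comp by blast
      then have "X \<in> far_side n - Z"
      proof (rule reachable_in_closed_set)
        show "v \<in> far_side n - Z" using v vZ by auto
        fix m p q assume m: "m \<in> nodes C" "p \<in> ends C m" "q \<in> ends C m" "p \<in> far_side n - Z"
        show "q \<in> far_side n - Z"
        proof (cases "m = n")
          case True then show ?thesis using m far_in_Z node_branches[OF n] by auto
        next
          case False then show ?thesis using far_side_closed m only_n by blast
        qed
      qed
      then show False using X_notin_far_side by blast
    qed
  qed
  ultimately show ?thesis using n by blast
qed

text \<open>Additivity of the canonical degree: deg(omega|Y) is the sum over the components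
  of Y, because each node inside Y is counted twice and each crossing node once.\<close>

lemma node_incidences:
  assumes n: "n \<in> nodes C" and Y: "Y \<subseteq> comps C"
  shows "(\<Sum>v\<in>Y. of_bool (v \<in> ends C n) :: int)
       = 2 * of_bool (ends C n \<subseteq> Y) + of_bool (n \<in> crossing Y)"
proof -
  obtain p q where pq: "ends C n = {p, q}" "p \<noteq> q" using node_ends_pair n by blast
  have pq_comps: "p \<in> comps C" "q \<in> comps C" using pq ends_subset n by auto
  have "finite Y" using Y comps_finite finite_subset by blast
  have "(\<Sum>v\<in>Y. of_bool (v \<in> ends C n) :: int)
      = (\<Sum>v\<in>Y. (if v = p then 1 else 0) + (if v = q then 1 else 0))"
    using pq by (intro sum.cong) auto
  also have "\<dots> = of_bool (p \<in> Y) + of_bool (q \<in> Y)"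
    using \<open>finite Y\<close> by (simp add: sum.distrib)
  finally show ?thesis using pq pq_comps n by (auto simp: crossing_def)
qed

lemma k_sub_singleton:
  assumes v: "v \<in> comps C"
  shows "int (k_sub C {v}) = (\<Sum>n\<in>nodes C. of_bool (v \<in> ends C n))"
proof -
  have "int (k_sub C {v}) = (\<Sum>n\<in>nodes C. of_bool (n \<in> crossing {v}))"
    using nodes_finite by (simp add: k_sub_crossing crossing_def Int_def)
  also have "\<dots> = (\<Sum>n\<in>nodes C. of_bool (v \<in> ends C n))"
    using node_branches v by (intro sum.cong) (auto simp: crossing_def)
  finally show ?thesis .
qed

lemma omega_singleton:
  assumes "v \<in> comps C"
  shows "deg_omega C {v} = 2 * int (ggen C v) - 2 + int (k_sub C {v})"
proof -
  have no_inner: "{n \<in> nodes C. ends C n \<subseteq> {v}} = {}"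
    using node_two_branches by (fastforce simp: subset_singleton_iff)
  show ?thesis by (simp add: deg_omega_def genus_sub_def chi_sub_def no_inner)
qed

lemma omega_additive:
  assumes Y: "Y \<subseteq> comps C"
  shows "deg_omega C Y = (\<Sum>v\<in>Y. deg_omega C {v})"
proof -
  have inner: "int (card {n \<in> nodes C. ends C n \<subseteq> Y}) = (\<Sum>n\<in>nodes C. of_bool (ends C n \<subseteq> Y))"
    using nodes_finite by (simp add: Int_def)
  have k: "int (k_sub C Y) = (\<Sum>n\<in>nodes C. of_bool (n \<in> crossing Y))"
    using nodes_finite by (simp add: k_sub_crossing crossing_def Int_def)
  have "2 * int (card {n \<in> nodes C. ends C n \<subseteq> Y}) + int (k_sub C Y)
      = (\<Sum>n\<in>nodes C. 2 * of_bool (ends C n \<subseteq> Y) + of_bool (n \<in> crossing Y))"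
    unfolding inner k by (simp add: sum.distrib sum_distrib_left)
  also have "\<dots> = (\<Sum>n\<in>nodes C. \<Sum>v\<in>Y. of_bool (v \<in> ends C n))"
    using node_incidences Y by (intro sum.cong) auto
  also have "\<dots> = (\<Sum>v\<in>Y. \<Sum>n\<in>nodes C. of_bool (v \<in> ends C n))" by (rule sum.swap)
  also have "\<dots> = (\<Sum>v\<in>Y. int (k_sub C {v}))" using k_sub_singleton Y by (intro sum.cong) auto
  finally have count: "2 * int (card {n \<in> nodes C. ends C n \<subseteq> Y}) + int (k_sub C Y)
      = (\<Sum>v\<in>Y. int (k_sub C {v}))" .
  have "deg_omega C Y = - 2 * (\<Sum>v\<in>Y. 1 - int (ggen C v))
      + (2 * int (card {n \<in> nodes C. ends C n \<subseteq> Y}) + int (k_sub C Y))"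
    by (simp add: deg_omega_def genus_sub_def chi_sub_def)
  also have "\<dots> = (\<Sum>v\<in>Y. (- 2) * (1 - int (ggen C v)) + int (k_sub C {v}))"
    unfolding count by (simp only: sum.distrib sum_distrib_left)
  also have "\<dots> = (\<Sum>v\<in>Y. 2 * int (ggen C v) - 2 + int (k_sub C {v}))"
    by (intro sum.cong) auto
  also have "\<dots> = (\<Sum>v\<in>Y. deg_omega C {v})" using omega_singleton Y by (intro sum.cong) auto
  finally show ?thesis .
qed

lemma omega_complement:
  assumes Y: "Y \<subseteq> comps C"
  shows "deg_omega C Y + deg_omega C (comps C - Y) = deg_omega C (comps C)"
  using omega_additive[OF Y] omega_additive[of "comps C - Y"] omega_additive[of "comps C"]
    sum.subset_diff[OF Y comps_finite, of "\<lambda>v. deg_omega C {v}"] by auto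

lemma balance_additive:
  assumes Y: "Y \<subseteq> comps C"
  shows "balance C m Y = (\<Sum>v\<in>Y. balance C m {v})"
proof -
  define c where "c = real_of_int (total_deg C m) / real_of_int (2 * genus C - 2)"
  have "balance C m Y
      = (\<Sum>v\<in>Y. real_of_int (m v)) - c * (\<Sum>v\<in>Y. real_of_int (deg_omega C {v}))"
    unfolding balance_def c_def deg_sub_def omega_additive[OF Y] by simp
  also have "\<dots> = (\<Sum>v\<in>Y. balance C m {v})"
    by (simp add: balance_def c_def deg_sub_def sum_subtractf sum_distrib_left)
  finally show ?thesis .
qed

text \<open>The sign with which the far side of n enters the balance of Y: +1 if Y contains
  only the far branch of n, -1 if only the near branch, 0 if n does not cross Y.\<close>

definition orientation :: "'n \<Rightarrow> 'v set \<Rightarrow> real" where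
  "orientation n Y = of_bool (far_end n \<in> Y) - of_bool (near_end n \<in> Y)"

lemma orientation_outside_crossing:
  "n \<in> nodes C \<Longrightarrow> Y \<subseteq> comps C \<Longrightarrow> n \<notin> crossing Y \<Longrightarrow> orientation n Y = 0"
  using node_branches[of n] by (auto simp: crossing_def orientation_def)

lemma orientation_values: "orientation n Y \<in> {-1, 0, 1}"
  by (auto simp: orientation_def)

text \<open>Telescoping along the path from X to v: the far sides containing v, weighted by
  their orientation, recover the indicator of Y at v relative to X.\<close>

lemma telescoping:
  assumes v: "v \<in> comps C"
  shows "(\<Sum>n\<in>nodes C. orientation n Y * of_bool (v \<in> far_side n))
       = of_bool (v \<in> Y) - of_bool (X \<in> Y)"
proof -
  define \<Phi> where "\<Phi> x = (\<Sum>n\<in>nodes C. orientation n Y * of_bool (x \<in> far_side n))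
                           - of_bool (x \<in> Y)" for x
  have across_node: "\<Phi> (far_end m) = \<Phi> (near_end m)" if m: "m \<in> nodes C" for m
  proof -
    let ?jump = "\<lambda>n. orientation n Y
                   * (of_bool (far_end m \<in> far_side n) - of_bool (near_end m \<in> far_side n))"
    have "(\<Sum>n\<in>nodes C - {m}. ?jump n) = 0"
    proof (rule sum.neutral, rule ballI)
      fix n assume "n \<in> nodes C - {m}"
      then have "far_end m \<in> far_side n \<longleftrightarrow> near_end m \<in> far_side n"
        using far_side_closed[of m n] m node_branches[OF m] by auto
      then show "?jump n = 0" by simp
    qed
    then have "(\<Sum>n\<in>nodes C. ?jump n) = orientation m Y"
      using sum.remove[OF nodes_finite m, of ?jump] node_branches[OF m] by simp
    then show ?thesis
      unfolding \<Phi>_def orientation_def by (simp add: right_diff_distrib sum_subtractf)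
  qed
  have "(X, v) \<in> (adj_rel C (nodes C))\<^sup>*" using dual_graph_connected X_comp v by blast
  then have "\<Phi> v = \<Phi> X"
  proof (induction rule: rtrancl_induct)
    case (step y z)
    then obtain m where m: "m \<in> nodes C" "y \<in> ends C m" "z \<in> ends C m"
      by (auto simp: adj_rel_def)
    then have "\<Phi> z = \<Phi> y" using across_node[OF m(1)] node_branches(1)[OF m(1)] by auto
    then show ?case using step by simp
  qed simp
  moreover have "\<Phi> X = - of_bool (X \<in> Y)" by (simp add: \<Phi>_def X_notin_far_side)
  ultimately show ?thesis unfolding \<Phi>_def by simp
qed

lemma inward_crossing_exists:
  assumes v: "v \<in> comps C" "v \<notin> Y" and XY: "X \<in> Y"
  shows "\<exists>n\<in>crossing Y. orientation n Y = -1"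
proof -
  have sum_eq: "(\<Sum>n\<in>nodes C. orientation n Y * of_bool (v \<in> far_side n)) = -1"
    using telescoping[OF v(1), of Y] v XY by simp
  have "\<exists>n\<in>nodes C. orientation n Y * of_bool (v \<in> far_side n) < 0"
  proof (rule ccontr)
    assume "\<not> ?thesis"
    then have "0 \<le> (\<Sum>n\<in>nodes C. orientation n Y * of_bool (v \<in> far_side n))"
      by (intro sum_nonneg) (auto simp: not_less)
    with sum_eq show False by linarith
  qed
  then obtain n where n: "n \<in> nodes C" "orientation n Y * of_bool (v \<in> far_side n) < 0"
    by blast
  then have o: "orientation n Y = -1"
    using orientation_values[of n Y] by (cases "v \<in> far_side n") auto
  have "far_end n \<notin> Y" "near_end n \<in> Y" using o unfolding orientation_def
    by (cases "far_end n \<in> Y"; cases "near_end n \<in> Y"; simp)+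
  then have "n \<in> crossing Y" using node_branches[OF n(1)] n(1) by (auto simp: crossing_def)
  then show ?thesis using o by blast
qed

end

text \<open>From now on the curve is stable of genus at least 2, so that canonical degrees are
  nonnegative and 2g-2 > 0.\<close>

locale stable_compact_type_curve = compact_type_curve C X
  for C :: "('v, 'n) nodal_curve" and X :: 'v +
  assumes stable: "stable C" and genus_ge_2: "genus C \<ge> 2"
begin

lemma omega_singleton_nonneg:
  assumes v: "v \<in> comps C"
  shows "0 \<le> deg_omega C {v}"
proof (cases "ggen C v = 0")
  case True
  have "ends C n \<noteq> {v}" if "n \<in> nodes C" for n
    using node_two_branches[OF that] by auto
  then have "k_sub C {v} \<ge> 3" using stable v True by (auto simp: stable_def)
  then show ?thesis using omega_singleton[OF v] True by simp
qed (use omega_singleton[OF v] in simp)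

lemma omega_nonneg:
  assumes Y: "Y \<subseteq> comps C"
  shows "0 \<le> deg_omega C Y"
  unfolding omega_additive[OF Y] using Y omega_singleton_nonneg by (intro sum_nonneg) blast

lemma omega_comps: "deg_omega C (comps C) = 2 * genus C - 2"
  by (simp add: deg_omega_def genus_def k_sub_crossing crossing_def)

lemma denominator_pos: "real_of_int (2 * genus C - 2) > 0"
  using genus_ge_2 by simp

lemma balance_comps: "balance C m (comps C) = 0"
  using denominator_pos by (simp add: balance_def omega_comps total_deg_def)

lemma balance_complement:
  assumes Y: "Y \<subseteq> comps C"
  shows "balance C m (comps C - Y) = - balance C m Y"
proof -
  have "balance C m (comps C - Y) = (\<Sum>v\<in>comps C - Y. balance C m {v})"
    "balance C m (comps C) = (\<Sum>v\<in>comps C. balance C m {v})"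
    by (rule balance_additive, blast)+
  then show ?thesis
    using balance_additive[OF Y, of m] balance_comps[of m]
      sum.subset_diff[OF Y comps_finite, of "\<lambda>v. balance C m {v}"] by linarith
qed

lemma balance_decomposition:
  assumes Y: "Y \<subseteq> comps C"
  shows "balance C m Y = (\<Sum>n\<in>crossing Y. orientation n Y * balance C m (far_side n))"
proof -
  define b where "b v = balance C m {v}" for v
  have far: "balance C m (far_side n) = (\<Sum>v\<in>comps C. of_bool (v \<in> far_side n) * b v)" for n
    using balance_additive[OF far_side_subset] sum_indicator_subset[OF comps_finite far_side_subset]
    unfolding b_def by simp
  have "(\<Sum>n\<in>nodes C. orientation n Y * balance C m (far_side n))
      = (\<Sum>v\<in>comps C. b v * (\<Sum>n\<in>nodes C. orientation n Y * of_bool (v \<in> far_side n)))"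
    unfolding far by (simp add: sum_distrib_left mult_ac sum.swap[of _ "nodes C"])
  also have "\<dots> = (\<Sum>v\<in>comps C. of_bool (v \<in> Y) * b v) - of_bool (X \<in> Y) * (\<Sum>v\<in>comps C. b v)"
    using telescoping by (simp add: right_diff_distrib sum_subtractf sum_distrib_left mult_ac)
  also have "\<dots> = balance C m Y"
    using sum_indicator_subset[OF comps_finite Y] balance_additive[OF Y]
      balance_additive[of "comps C"] balance_comps unfolding b_def by simp
  finally have "balance C m Y = (\<Sum>n\<in>nodes C. orientation n Y * balance C m (far_side n))" ..
  also have "\<dots> = (\<Sum>n\<in>crossing Y. orientation n Y * balance C m (far_side n))"
    by (rule sum.mono_neutral_right)
      (use nodes_finite orientation_outside_crossing Y in \<open>auto simp: crossing_def\<close>)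
  finally show ?thesis .
qed

lemma balance_window_iff:
  "(- 1/2 \<le> balance C m Y \<and> balance C m Y < 1/2)
   \<longleftrightarrow> (- (2 * genus C - 2) \<le> 2 * scaled_balance C m Y \<and> 2 * scaled_balance C m Y < 2 * genus C - 2)"
proof -
  define D where "D = real_of_int (2 * genus C - 2)"
  define s where "s = real_of_int (scaled_balance C m Y)"
  have D: "D > 0" using denominator_pos by (simp add: D_def)
  have "balance C m Y = s / D"
    using D unfolding balance_def scaled_balance_def D_def s_def by (simp add: field_simps)
  moreover have "- 1/2 \<le> s / D \<longleftrightarrow> - D \<le> 2 * s"
    using pos_le_divide_eq[OF D, of "- 1/2" s] by linarith
  moreover have "s / D < 1/2 \<longleftrightarrow> 2 * s < D"
    using pos_divide_less_eq[OF D, of s "1/2"] by linarith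
  ultimately show ?thesis unfolding D_def s_def by linarith
qed

text \<open>Quasistability forces every far side into the window: the lower bound is
  semistability of the tail, the strict upper bound is quasistability of its
  complement, which contains X.\<close>

lemma quasistable_far_side_window:
  assumes qs: "quasistable C X m" and n: "n \<in> nodes C"
  shows "- 1/2 \<le> balance C m (far_side n) \<and> balance C m (far_side n) < 1/2"
proof -
  have k: "k_sub C (far_side n) = 1" "k_sub C (comps C - far_side n) = 1"
    using crossing_far_side[OF n] crossing_complement[OF far_side_subset]
    by (simp_all add: k_sub_crossing)
  have "far_side n \<noteq> {}" "far_side n \<noteq> comps C"
    using far_side_nonempty[OF n] X_notin_far_side X_comp by blast+
  then have "\<bar>balance C m (far_side n)\<bar> \<le> real (k_sub C (far_side n)) / 2"
    using qs far_side_subset unfolding quasistable_def semistable_def by blast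
  moreover have "comps C - far_side n \<noteq> comps C"
    using far_side_nonempty[OF n] far_side_subset by blast
  then have "balance C m (comps C - far_side n) > - real (k_sub C (comps C - far_side n)) / 2"
    using qs X_comp X_notin_far_side unfolding quasistable_def by blast
  ultimately show ?thesis
    using balance_complement[OF far_side_subset, of m n] k by (simp add: abs_le_iff)
qed

text \<open>Conversely, if all far sides lie in the window, the multidegree is X-quasistable:
  the decomposition bounds each crossing term by 1/2, and for Y containing X a node
  pointing into Y contributes a term strictly above -1/2.\<close>

lemma quasistable_if_far_side_windows:
  assumes window: "\<And>n. n \<in> nodes C \<Longrightarrow>
      - 1/2 \<le> balance C m (far_side n) \<and> balance C m (far_side n) < 1/2"
  shows "quasistable C X m"
proof -
  have term_bound: "- 1/2 \<le> orientation n Y * balance C m (far_side n)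
      \<and> orientation n Y * balance C m (far_side n) \<le> 1/2" if "n \<in> crossing Y" for n Y
    using orientation_values[of n Y] window[OF crossing_nodes[OF that]] by auto
  have "\<bar>balance C m Y\<bar> \<le> real (k_sub C Y) / 2" if Y: "Y \<subseteq> comps C" for Y
  proof -
    have "\<bar>balance C m Y\<bar> \<le> (\<Sum>n\<in>crossing Y. \<bar>orientation n Y * balance C m (far_side n)\<bar>)"
      unfolding balance_decomposition[OF Y] by (rule sum_abs)
    also have "\<dots> \<le> (\<Sum>n\<in>crossing Y. 1/2)"
    proof (rule sum_mono)
      fix n assume "n \<in> crossing Y"
      then show "\<bar>orientation n Y * balance C m (far_side n)\<bar> \<le> 1/2"
        using term_bound[of n Y] by linarith
    qed
    finally show ?thesis by (simp add: k_sub_crossing)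
  qed
  moreover have "balance C m Y > - real (k_sub C Y) / 2"
    if Y: "Y \<subseteq> comps C" "Y \<noteq> comps C" "X \<in> Y" for Y
  proof -
    obtain v where "v \<in> comps C" "v \<notin> Y" using Y by blast
    then obtain n where n: "n \<in> crossing Y" "orientation n Y = -1"
      using inward_crossing_exists Y(3) by blast
    have "(\<Sum>n\<in>crossing Y. (- 1/2::real)) < (\<Sum>n\<in>crossing Y. orientation n Y * balance C m (far_side n))"
    proof (rule sum_strict_mono_ex1[OF crossing_finite])
      show "\<forall>l\<in>crossing Y. - 1/2 \<le> orientation l Y * balance C m (far_side l)"
        using term_bound by blast
      show "\<exists>l\<in>crossing Y. - 1/2 < orientation l Y * balance C m (far_side l)"
        using n window[OF crossing_nodes[OF n(1)]] by (intro bexI[of _ n]) auto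
    qed
    then show ?thesis unfolding balance_decomposition[OF Y(1)] by (simp add: k_sub_crossing)
  qed
  ultimately show ?thesis by (simp add: quasistable_def semistable_def)
qed

definition twist :: "'v multideg \<Rightarrow> 'v multideg" where
  "twist m v = m v + unit_mdeg X v - (\<Sum>Z\<in>big_tails C m X. mdeg_OZ C Z v)"

lemma big_tail_far_side: "Z \<in> big_tails C m X \<Longrightarrow> \<exists>n\<in>nodes C. Z = far_side n"
  using tail_is_far_side by (auto simp: big_tails_def big_tail_def)

lemma big_tails_finite: "finite (big_tails C m X)"
  by (rule finite_subset[of _ "far_side ` nodes C"]) (use big_tail_far_side nodes_finite in auto)

lemma deg_O_far_side:
  assumes n: "n \<in> nodes C" and Y: "Y \<subseteq> comps C"
  shows "deg_sub (mdeg_OZ C (far_side n)) Y = of_bool (near_end n \<in> Y) - of_bool (far_end n \<in> Y)"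
proof -
  have "mdeg_OZ C (far_side n) v = of_bool (v = near_end n) - of_bool (v = far_end n)" for v
    using crossing_far_side[OF n] node_branches[OF n] unfolding mdeg_OZ_def crossing_def by auto
  moreover have "finite Y" using Y comps_finite finite_subset by blast
  ultimately show ?thesis unfolding deg_sub_def by (simp add: sum_subtractf)
qed

lemma deg_O_big_tail_on_far_side:
  assumes Z: "Z \<in> big_tails C m X" and n: "n \<in> nodes C"
  shows "deg_sub (mdeg_OZ C Z) (far_side n) = - of_bool (Z = far_side n)"
proof -
  obtain l where l: "l \<in> nodes C" "Z = far_side l" using big_tail_far_side Z by blast
  show ?thesis
  proof (cases "l = n")
    case False
    then have "far_end l \<in> far_side n \<longleftrightarrow> near_end l \<in> far_side n"
      using far_side_closed[of l n] l node_branches[OF l(1)] by auto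
    then show ?thesis using deg_O_far_side[OF l(1) far_side_subset] l far_side_inj n False by auto
  qed (use deg_O_far_side[OF l(1) far_side_subset] node_branches[OF l(1)] l in simp)
qed

lemma deg_twist:
  assumes Y: "Y \<subseteq> comps C"
  shows "deg_sub (twist m) Y
       = deg_sub m Y + of_bool (X \<in> Y) - (\<Sum>Z\<in>big_tails C m X. deg_sub (mdeg_OZ C Z) Y)"
proof -
  have "finite Y" using Y comps_finite finite_subset by blast
  then have "(\<Sum>v\<in>Y. unit_mdeg X v) = of_bool (X \<in> Y)" by (simp add: unit_mdeg_def)
  then show ?thesis
    unfolding twist_def deg_sub_def by (simp add: sum.distrib sum_subtractf sum.swap[of _ Y])
qed

lemma total_deg_twist: "total_deg C (twist m) = total_deg C m + 1"
proof -
  have "deg_sub (mdeg_OZ C Z) (comps C) = 0" if "Z \<in> big_tails C m X" for Z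
    using big_tail_far_side[OF that] deg_O_far_side[of _ "comps C"] node_branches by force
  then show ?thesis using deg_twist[of "comps C"] X_comp by (simp add: total_deg_def)
qed

lemma deg_twist_far_side:
  assumes n: "n \<in> nodes C"
  shows "deg_sub (twist m) (far_side n) = deg_sub m (far_side n) + of_bool (far_side n \<in> big_tails C m X)"
proof -
  have "(\<Sum>Z\<in>big_tails C m X. deg_sub (mdeg_OZ C Z) (far_side n))
      = (\<Sum>Z\<in>big_tails C m X. - of_bool (Z = far_side n))"
    using deg_O_big_tail_on_far_side n by (intro sum.cong) auto
  also have "\<dots> = - of_bool (far_side n \<in> big_tails C m X)"
    using big_tails_finite by (simp add: sum_negf)
  finally show ?thesis using deg_twist[OF far_side_subset] X_notin_far_side by simp
qed

lemma twist_far_side_window: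
  assumes qs: "quasistable C X m" and n: "n \<in> nodes C"
  shows "- 1/2 \<le> balance C (twist m) (far_side n) \<and> balance C (twist m) (far_side n) < 1/2"
proof -
  define G where "G = genus C"
  define A where "A = scaled_balance C m (far_side n)"
  define w where "w = deg_omega C (far_side n)"
  define gF where "gF = genus_sub C (far_side n)"
  have "k_sub C (far_side n) = 1" using far_side_is_tail[OF n] by (simp add: is_tail_def)
  then have w_genus: "w = 2 * gF - 1" unfolding w_def gF_def deg_omega_def by simp
  have "0 \<le> deg_omega C (comps C - far_side n)" by (rule omega_nonneg) blast
  then have w: "w = 2 * gF - 1" "0 \<le> w" "w \<le> 2 * G - 2"
    using w_genus omega_nonneg[OF far_side_subset[of n]] omega_complement[OF far_side_subset[of n]]
      omega_comps unfolding w_def G_def by linarith+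
  have A: "- (2 * G - 2) \<le> 2 * A" "2 * A < 2 * G - 2"
    using quasistable_far_side_window[OF qs n] unfolding balance_window_iff A_def G_def by auto
  have big: "far_side n \<in> big_tails C m X \<longleftrightarrow> A < 2 * gF - G"
    using far_side_is_tail[OF n] X_notin_far_side
    unfolding big_tails_def big_tail_def A_def gF_def G_def scaled_balance_def by auto
  have "scaled_balance C (twist m) (far_side n)
      = A + (if A < 2 * gF - G then 2 * G - 2 else 0) - w"
    using deg_twist_far_side[OF n, of m] total_deg_twist[of m] big
    unfolding scaled_balance_def A_def w_def G_def by (simp add: algebra_simps)
  then show ?thesis
    unfolding balance_window_iff using twist_stays_in_window[OF w A] by (simp add: G_def)
qed

end

theorem mainTheorem3:
  fixes C :: "('v, 'n) nodal_curve" and X :: 'v and md :: "'v multideg"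
  assumes "wf_curve C" and "compact_type C" and "stable C" and "genus C \<ge> 2"
    and "X \<in> comps C"
    and "quasistable C X md"
  shows "quasistable C X
           (\<lambda>v. md v + unit_mdeg X v - (\<Sum>Z\<in>big_tails C md X. mdeg_OZ C Z v))"
proof -
  interpret stable_compact_type_curve C X
    using assms by unfold_locales auto
  have "quasistable C X (twist md)"
    using quasistable_if_far_side_windows twist_far_side_window[OF assms(6)] by blast
  then show ?thesis unfolding twist_def .
qed

end
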